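(* Let $C\subseteq\mathbb{F}_q^n$ be a linear code and $(A,B)$ a $2$-power $t$-error locating pair for $C$. Let $\mathbf{y}=\mathbf{c}+\mathbf{e}$ with $\mathbf{c}\in C$, $\mathrm{w}(\mathbf{e})=t$, $I_{\mathbf{e}}=\mathrm{supp}(\mathbf{e})$, and $M=M_1\cap M_2$ with $M_1=\{\mathbf{a}\in A\mid \langle \mathbf{a}*\mathbf{y},\mathbf{b}\rangle=0\ \forall \mathbf{b}\in B\}$, $M_2=\{\mathbf{a}\in A\mid \langle \mathbf{a}*\mathbf{y}^2,\mathbf{v}\rangle=0\ \forall \mathbf{v}\in (B^{\perp}*C)^{\perp}\}$. The following are equivalent: (i) $M=A(I_{\mathbf{e}})$; (ii) $M(I_{\mathbf{e}})=M$; (iii) $M_{I_{\mathbf{e}}}=\{0\}$.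
   Context: All codes are $\mathbb{F}_q$-linear subspaces of $\mathbb{F}_q^n$. $\mathbf{u}*\mathbf{v}=(u_1v_1,\dots,u_nv_n)$, $\mathbf{u}^i=(u_1^i,\dots,u_n^i)$; $A*B$ is the span of all $\mathbf{a}*\mathbf{b}$; $\langle\mathbf{u},\mathbf{v}\rangle=\sum_iu_iv_i$, $X^\perp$ the dual. $\mathrm{w}$ Hamming weight, $\mathrm{d}$ minimum distance. For $J=\{j_1<\dots<j_s\}$, $\mathbf{x}_J=(x_{j_1},\dots,x_{j_s})$, $X_J=\{\mathbf{x}_J:\mathbf{x}\in X\}\subseteq\mathbb{F}_q^{|J|}$ (puncturing, keeping the coordinates in $J$), and $X(J)=\{\mathbf{x}\in X:\mathbf{x}_J=\mathbf{0}\}\subseteq\mathbb{F}_q^n$. A pair $(A,B)$ is a $2$-power $t$-error locating pair for $C$ if: (1) $A*B\subseteq C^\perp$; (2) $\dim A>t$; (3) $\mathrm{d}(A^\perp)>t$; (4) $\mathrm{d}(A)+\mathrm{d}(C)>n$; (5) $\dim B+\dim (B^\perp*C)^\perp\ge t$. *)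

theory Defs
  imports "HOL-Analysis.Analysis"
begin

text \<open>Vectors of F_q^n are modelled as 'a ^ 'n with 'a a finite field and 'n a finite
  index type of cardinality n. Codes are subspaces w.r.t. the library scalar
  multiplication (*s); dimension is vec.dim. The componentwise (Schur) product
  u * v is the library's componentwise times on vec.\<close>

definition vpow :: "'a::field ^ 'n \<Rightarrow> nat \<Rightarrow> 'a ^ 'n" where
  "vpow u k = (\<chi> i. (u $ i) ^ k)"

definition schur_code :: "('a::field ^ 'n) set \<Rightarrow> ('a ^ 'n) set \<Rightarrow> ('a ^ 'n) set" where
  "schur_code A B = vec.span {a * b | a b. a \<in> A \<and> b \<in> B}"

definition dotp :: "'a::field ^ 'n \<Rightarrow> 'a ^ 'n \<Rightarrow> 'a" where
  "dotp u v = (\<Sum>i\<in>UNIV. u $ i * v $ i)"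

definition dual :: "('a::field ^ 'n) set \<Rightarrow> ('a ^ 'n) set" where
  "dual X = {y. \<forall>x\<in>X. dotp x y = 0}"

definition supp :: "'a::zero ^ 'n \<Rightarrow> 'n set" where
  "supp x = {i. x $ i \<noteq> 0}"

definition hweight :: "'a::zero ^ 'n \<Rightarrow> nat" where
  "hweight x = card (supp x)"

text \<open>Minimum distance; for the zero code we use the convention d = n + 1
  (i.e. larger than any possible weight, playing the role of infinity).\<close>
definition mindist :: "('a::zero ^ 'n) set \<Rightarrow> nat" where
  "mindist X = (if X \<subseteq> {0} then CARD('n) + 1
                else Min (hweight ` (X - {0})))"

definition shorten :: "('a::zero ^ 'n) set \<Rightarrow> 'n set \<Rightarrow> ('a ^ 'n) set" where
  "shorten X J = {x \<in> X. \<forall>j\<in>J. x $ j = 0}"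

text \<open>Puncturing X_J: keep the coordinates in J. Realised by zeroing the
  coordinates outside J (canonically isomorphic to the subset of F_q^|J|).\<close>
definition punct :: "('a::zero ^ 'n) set \<Rightarrow> 'n set \<Rightarrow> ('a ^ 'n) set" where
  "punct X J = (\<lambda>x. \<chi> i. if i \<in> J then x $ i else 0) ` X"

definition two_power_ELP ::
  "('a::{field,finite} ^ 'n) set \<Rightarrow> ('a ^ 'n) set \<Rightarrow> ('a ^ 'n) set \<Rightarrow> nat \<Rightarrow> bool" where
  "two_power_ELP A B C t \<longleftrightarrow>
     vec.subspace A \<and> vec.subspace B \<and>
     schur_code A B \<subseteq> dual C \<and>
     vec.dim A > t \<and>
     mindist (dual A) > t \<and>
     mindist A + mindist C > CARD('n) \<and>
     vec.dim B + vec.dim (dual (schur_code (dual B) C)) \<ge> t"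

end

theory Submission
  imports Defs
begin

text \<open>A word a of A vanishing on the error positions I sees only the codeword part of
  y = c + e, so a * y = a * c and a * y^2 = (a * c) * c. Since A * B is orthogonal to C,
  the word a * c lies in the dual of B, and then (a * c) * c lies in (dual B) * C; these
  are exactly the defining equations of M1 and M2. Hence A(I) \<subseteq> M \<subseteq> A, and all
  three conditions say that M vanishes on I.\<close>

lemma dotp_commute: "dotp u v = dotp v (u :: 'a::field ^ 'n)"
  unfolding dotp_def by (simp add: mult.commute)

lemma dotp_mult_left: "dotp (a * u) v = dotp u (a * (v :: 'a::field ^ 'n))"
  unfolding dotp_def by (auto intro!: sum.cong simp: algebra_simps)

lemma dotp_dual_eq_0: "x \<in> X \<Longrightarrow> v \<in> dual X \<Longrightarrow> dotp x v = 0"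
  unfolding dual_def by blast

lemma mult_in_schur_code: "a \<in> A \<Longrightarrow> b \<in> B \<Longrightarrow> a * b \<in> schur_code A B"
  unfolding schur_code_def by (rule vec.span_base) blast

lemma vpow_1: "vpow u 1 = u"
  unfolding vpow_def by (simp add: vec_eq_iff)

lemma vpow_2: "vpow u 2 = u * u"
  unfolding vpow_def by (simp add: vec_eq_iff power2_eq_square)

lemma mult_add_vanishing_supp:
  assumes "\<forall>j\<in>supp e. a $ j = 0"
  shows "a * vpow (c + e) k = a * vpow c k"
proof -
  have "a $ i * (c $ i + e $ i) ^ k = a $ i * c $ i ^ k" for i
    using assms unfolding supp_def by (cases "e $ i = 0") auto
  then show ?thesis unfolding vpow_def by (simp add: vec_eq_iff)
qed

lemma mult_in_dual_of_schur:
  assumes "schur_code A B \<subseteq> dual C" and "a \<in> A" and "c \<in> C"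
  shows "a * c \<in> dual B"
proof -
  have "dotp b (a * c) = 0" if "b \<in> B" for b
  proof -
    have "a * b \<in> dual C" using assms mult_in_schur_code[OF \<open>a \<in> A\<close> that] by blast
    then have "dotp c (a * b) = 0" using \<open>c \<in> C\<close> by (rule dotp_dual_eq_0[rotated])
    then show ?thesis by (simp only: dotp_commute[of b] dotp_mult_left)
  qed
  then show ?thesis unfolding dual_def by blast
qed

lemma shorten_supp_error_orthogonal:
  assumes "schur_code A B \<subseteq> dual C" and "c \<in> C" and "a \<in> shorten A (supp e)"
  shows "\<forall>b\<in>B. dotp (a * (c + e)) b = 0"
    and "\<forall>v\<in>dual (schur_code (dual B) C). dotp (a * vpow (c + e) 2) v = 0"
proof -
  have "a \<in> A" and vanish: "\<forall>j\<in>supp e. a $ j = 0"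
    using assms(3) unfolding shorten_def by auto
  have ac: "a * c \<in> dual B" by (rule mult_in_dual_of_schur[OF assms(1) \<open>a \<in> A\<close> assms(2)])
  have "a * (c + e) = a * c"
    using mult_add_vanishing_supp[OF vanish, of c 1] by (simp only: vpow_1)
  with ac show "\<forall>b\<in>B. dotp (a * (c + e)) b = 0"
    by (metis dotp_commute dotp_dual_eq_0)
  have "a * vpow (c + e) 2 = a * vpow c 2" by (rule mult_add_vanishing_supp[OF vanish])
  also have "\<dots> = (a * c) * c" by (simp only: vpow_2 mult.assoc)
  finally have "a * vpow (c + e) 2 = (a * c) * c" .
  moreover have "(a * c) * c \<in> schur_code (dual B) C"
    using mult_in_schur_code ac \<open>c \<in> C\<close> .
  ultimately show "\<forall>v\<in>dual (schur_code (dual B) C). dotp (a * vpow (c + e) 2) v = 0"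
    by (simp add: dotp_dual_eq_0)
qed

lemma eq_shorten_iff_shorten_eq:
  assumes "shorten A I \<subseteq> M" and "M \<subseteq> A"
  shows "M = shorten A I \<longleftrightarrow> shorten M I = M"
  using assms unfolding shorten_def by blast

lemma shorten_eq_iff_punct_eq_0:
  fixes X :: "('a::zero ^ 'n) set"
  assumes "0 \<in> X"
  shows "shorten X I = X \<longleftrightarrow> punct X I = {0}"
proof -
  have restrict_0: "(\<chi> i. if i \<in> I then x $ i else 0) = 0 \<longleftrightarrow> (\<forall>j\<in>I. x $ j = 0)"
    for x :: "'a ^ 'n"
    by (auto simp: vec_eq_iff)
  have "punct X I = {0} \<longleftrightarrow> (\<forall>x\<in>X. (\<chi> i. if i \<in> I then x $ i else 0) = 0)"
    using assms unfolding punct_def by auto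
  also have "\<dots> \<longleftrightarrow> shorten X I = X"
    unfolding restrict_0 shorten_def by blast
  finally show ?thesis by (rule sym)
qed

theorem lemma3p7:
  fixes C A B :: "('a::{field,finite} ^ 'n) set"
    and c e y :: "'a ^ 'n" and t :: nat
  assumes "vec.subspace C"
    and "two_power_ELP A B C t"
    and "c \<in> C" and "hweight e = t" and "y = c + e"
  defines "M1 \<equiv> {a \<in> A. \<forall>b\<in>B. dotp (a * y) b = 0}"
    and "M2 \<equiv> {a \<in> A. \<forall>v\<in>dual (schur_code (dual B) C). dotp (a * vpow y 2) v = 0}"
  defines "M \<equiv> M1 \<inter> M2"
  shows "(M = shorten A (supp e) \<longleftrightarrow> shorten M (supp e) = M)
       \<and> (shorten M (supp e) = M \<longleftrightarrow> punct M (supp e) = {0})"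
proof -
  have "vec.subspace A" and AB: "schur_code A B \<subseteq> dual C"
    using assms(2) unfolding two_power_ELP_def by auto
  have "M \<subseteq> A" unfolding M_def M1_def by blast
  have shorten_le_M: "shorten A (supp e) \<subseteq> M"
  proof
    fix a assume "a \<in> shorten A (supp e)"
    then show "a \<in> M"
      using shorten_supp_error_orthogonal[OF AB \<open>c \<in> C\<close>]
      unfolding M_def M1_def M2_def \<open>y = c + e\<close> shorten_def by auto
  qed
  have "0 \<in> shorten A (supp e)"
    using vec.subspace_0[OF \<open>vec.subspace A\<close>] unfolding shorten_def by simp
  then have "0 \<in> M" using shorten_le_M by blast
  show ?thesis
    by (intro conjI eq_shorten_iff_shorten_eq[OF shorten_le_M \<open>M \<subseteq> A\<close>]
        shorten_eq_iff_punct_eq_0[OF \<open>0 \<in> M\<close>])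
qed

end
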